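(* Fix a positive integer $n$, a nonzero $n$-partition $\lambda$ with $\lambda_n=0$, an $n$-semistandard tableau $T$ of shape $\lambda$, and $1\le h\le d+1$. Then for every location $(j,i)\ge(\beta_h,1)$ (in reading order) at which $\pi^{(j,i)}$ is defined, we have $\pi^{(j,i)}_{\zeta_{h-1}+1}<\dots<\pi^{(j,i)}_{\zeta_h}$.
   Context: Identify $\lambda=(\lambda_1,\dots,\lambda_n)$ (weakly decreasing nonnegative integers, $\lambda_n=0$, $\lambda\ne0$) with its Young diagram; $c_j$ is the length of column $j$. Let $\zeta_1<\dots<\zeta_d$ be the distinct column lengths, $\zeta_0:=0$, $\zeta_{d+1}:=n$; for $1\le h\le d$ let $\beta_h$ be the index of the rightmost column of length $\zeta_h$, and $\beta_{d+1}:=1$. Write $(j,i)$ for the box in column $j$, row $i$. Reading order: $(l,k)\le(j,i)$ iff $l<j$, or $l=j$ and $k\ge i$; convention $(j,c_j+1)$ means $(j-1,1)$. An $n$-semistandard tableau $T$ of shape $\lambda$ has entries in $[n]$, weakly increasing along rows, strictly increasing down columns; $T(j,i)$ is its entry, $C_j$ its $j$-th column. Permutations are in one-line form. Greedy procedure: $\pi^{(1,1)}$ has first $c_1$ entries those of $C_1$ increasing, followed by the rest of $[n]$ increasing. For $(j,i)$ with $j\ge2$ in reading order from $(2,c_2)$ to $(\lambda_1,1)$, define $\pi^{(j,i)}$ from $\pi:=\pi^{(j,i+1)}$: if $T(j-1,i)=T(j,i)$ set $\pi^{(j,i)}=\pi$; otherwise let $i_0=i$, and given $i_{x-1}$ with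 $\pi_{i_{x-1}}<T(j,i)$ let $i_x$ be the smallest index $>c_j$ with $\pi_{i_{x-1}}<\pi_{i_x}\le T(j,i)$, stopping at $i_m$ with $\pi_{i_m}=T(j,i)$; set $\pi^{(j,i)}_{i_x}=\pi_{i_{x-1}}$ ($1\le x\le m$), $\pi^{(j,i)}_{i_0}=\pi_{i_m}$, others unchanged. Thus $\pi^{(j,i)}$ is defined at $(1,1)$ and at all $(j,i)$ with $j\ge2$. *)

theory Defs
  imports Main
begin

(* Partition lambda = (lam 1, ..., lam n), rows indexed 1..n *)
definition is_partition :: "nat \<Rightarrow> (nat \<Rightarrow> nat) \<Rightarrow> bool" where
  "is_partition n lam \<longleftrightarrow>
     (\<forall>i. 1 \<le> i \<longrightarrow> i < n \<longrightarrow> lam (Suc i) \<le> lam i) \<and>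
     lam n = 0 \<and> (\<exists>i\<in>{1..n}. lam i \<noteq> 0)"

definition col_len :: "nat \<Rightarrow> (nat \<Rightarrow> nat) \<Rightarrow> nat \<Rightarrow> nat" where
  "col_len n lam j = card {i\<in>{1..n}. j \<le> lam i}"

definition ncols :: "(nat \<Rightarrow> nat) \<Rightarrow> nat" where
  "ncols lam = lam 1"

(* T j i = entry in column j, row i *)
definition ssyt :: "nat \<Rightarrow> (nat \<Rightarrow> nat) \<Rightarrow> (nat \<Rightarrow> nat \<Rightarrow> nat) \<Rightarrow> bool" where
  "ssyt n lam T \<longleftrightarrow>
     (\<forall>j i. 1 \<le> j \<longrightarrow> j \<le> ncols lam \<longrightarrow> 1 \<le> i \<longrightarrow> i \<le> col_len n lam j \<longrightarrow>
        1 \<le> T j i \<and> T j i \<le> n) \<and>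
     (\<forall>j i. 1 \<le> j \<longrightarrow> j + 1 \<le> ncols lam \<longrightarrow> 1 \<le> i \<longrightarrow> i \<le> col_len n lam (j+1) \<longrightarrow>
        T j i \<le> T (j+1) i) \<and>
     (\<forall>j i. 1 \<le> j \<longrightarrow> j \<le> ncols lam \<longrightarrow> 1 \<le> i \<longrightarrow> i + 1 \<le> col_len n lam j \<longrightarrow>
        T j i < T j (i+1))"

definition col_lens :: "nat \<Rightarrow> (nat \<Rightarrow> nat) \<Rightarrow> nat set" where
  "col_lens n lam = col_len n lam ` {1..ncols lam}"

definition ndist :: "nat \<Rightarrow> (nat \<Rightarrow> nat) \<Rightarrow> nat" where
  "ndist n lam = card (col_lens n lam)"

definition zeta :: "nat \<Rightarrow> (nat \<Rightarrow> nat) \<Rightarrow> nat \<Rightarrow> nat" where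
  "zeta n lam h = (if h = 0 then 0
      else if h \<le> ndist n lam then sorted_list_of_set (col_lens n lam) ! (h - 1)
      else n)"

definition beta :: "nat \<Rightarrow> (nat \<Rightarrow> nat) \<Rightarrow> nat \<Rightarrow> nat" where
  "beta n lam h = (if 1 \<le> h \<and> h \<le> ndist n lam
      then Max {j\<in>{1..ncols lam}. col_len n lam j = zeta n lam h} else 1)"

definition reading_le :: "nat \<times> nat \<Rightarrow> nat \<times> nat \<Rightarrow> bool" where
  "reading_le p q \<longleftrightarrow> fst p < fst q \<or> (fst p = fst q \<and> snd q \<le> snd p)"

(* permutations in one-line form: pi k for positions k = 1..n *)

definition pi0 :: "nat \<Rightarrow> (nat \<Rightarrow> nat) \<Rightarrow> (nat \<Rightarrow> nat \<Rightarrow> nat) \<Rightarrow> nat \<Rightarrow> nat" where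
  "pi0 n lam T k = (let c = col_len n lam 1 in
      if 1 \<le> k \<and> k \<le> c then T 1 k
      else if c < k \<and> k \<le> n then
        sorted_list_of_set ({1..n} - T 1 ` {1..c}) ! (k - c - 1)
      else k)"

(* the index sequence i_0, i_1, ..., i_m of a greedy step with column length c,
   target value t, starting at index i0 *)
definition is_chain :: "nat \<Rightarrow> nat \<Rightarrow> nat \<Rightarrow> (nat \<Rightarrow> nat) \<Rightarrow> nat \<Rightarrow> nat list \<Rightarrow> bool" where
  "is_chain n c t p i0 is \<longleftrightarrow>
     is \<noteq> [] \<and> hd is = i0 \<and> p (last is) = t \<and>
     (\<forall>x. Suc x < length is \<longrightarrow>
        p (is ! x) < t \<and>
        (\<exists>k. c < k \<and> k \<le> n \<and> p (is ! x) < p k \<and> p k \<le> t) \<and>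
        is ! Suc x = (LEAST k. c < k \<and> k \<le> n \<and> p (is ! x) < p k \<and> p k \<le> t))"

(* new permutation: position i_x gets p(i_{x-1}) for 1 \<le> x \<le> m, position i_0 gets p(i_m) *)
definition chain_update :: "(nat \<Rightarrow> nat) \<Rightarrow> nat list \<Rightarrow> nat \<Rightarrow> nat" where
  "chain_update p is k = (if k = hd is then p (last is)
      else (case map_of (zip (tl is) (map p (butlast is))) k of
              Some v \<Rightarrow> v | None \<Rightarrow> p k))"

definition greedy_step :: "nat \<Rightarrow> (nat \<Rightarrow> nat) \<Rightarrow> (nat \<Rightarrow> nat \<Rightarrow> nat) \<Rightarrow> nat \<Rightarrow> nat
     \<Rightarrow> (nat \<Rightarrow> nat) \<Rightarrow> (nat \<Rightarrow> nat) \<Rightarrow> bool" where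
  "greedy_step n lam T j i p p' \<longleftrightarrow>
     (if T (j-1) i = T j i then p' = p
      else (\<exists>is. is_chain n (col_len n lam j) (T j i) p i is \<and> p' = chain_update p is))"

(* greedy n lam T (j,i) p  <->  p is pi^(j,i) (defined at (1,1) and at (j,i), 2 \<le> j \<le> lambda_1,
   1 \<le> i \<le> c_j; predecessor of (j,i) is (j,i+1), with (j,c_j+1) meaning (j-1,1)) *)
inductive greedy :: "nat \<Rightarrow> (nat \<Rightarrow> nat) \<Rightarrow> (nat \<Rightarrow> nat \<Rightarrow> nat) \<Rightarrow> nat \<times> nat
     \<Rightarrow> (nat \<Rightarrow> nat) \<Rightarrow> bool" for n lam T where
  start: "greedy n lam T (1,1) (pi0 n lam T)"
| step: "\<lbrakk> 2 \<le> j; j \<le> ncols lam; 1 \<le> i; i \<le> col_len n lam j;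
           greedy n lam T (if i = col_len n lam j then (j-1, 1) else (j, i+1)) p;
           greedy_step n lam T j i p p' \<rbrakk>
         \<Longrightarrow> greedy n lam T (j,i) p'"

end

theory Submission
  imports Defs
begin

text \<open>
  A greedy step at (j, i) either changes nothing or rotates the values of \<pi> along a chain
  i = i_0, i_1, ..., i_m: position i_0 receives T(j, i) and each i_x receives the old value at
  i_(x-1). The indices i_1, ..., i_m exceed c_j, carry increasing values, and each is the smallest
  admissible one; this minimality makes the rotation preserve the relative order of the values at
  any two positions beyond c_j. By induction along the reading order, \<pi>^(j,i) is a permutation
  agreeing with column j of T in rows i, ..., c_j and with column j - 1 above row i. Hence at
  (\<beta>_h, 1) the positions \<zeta>_(h-1) + 1, ..., \<zeta>_h hold part of the strictly increasing column \<beta>_h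
  (for h = d + 1 they hold the sorted complement of the first column), and since every later
  column has length at most \<zeta>_(h-1), this block stays sorted.
\<close>

lemma chain_update_notin:
  assumes "k \<notin> set xs" "xs \<noteq> []"
  shows "chain_update p xs k = p k"
proof -
  have "k \<notin> set (tl xs)" using assms by (meson list.set_sel(2))
  then have "map_of (zip (tl xs) (map p (butlast xs))) k = None"
    by (auto simp: map_of_eq_None_iff dest: set_zip_leftD)
  moreover have "k \<noteq> hd xs" using assms by auto
  ultimately show ?thesis unfolding chain_update_def by (simp only: if_False option.case)
qed

context
  fixes n c t :: nat and p :: "nat \<Rightarrow> nat" and i0 :: nat and xs :: "nat list"
  assumes chain: "is_chain n c t p i0 xs"
begin

lemma is_chain_nonempty: "xs \<noteq> []"
  using chain unfolding is_chain_def by simp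

lemma is_chain_hd: "xs ! 0 = i0"
  using chain unfolding is_chain_def by (metis hd_conv_nth)

lemma is_chain_last: "p (xs ! (length xs - 1)) = t"
  using chain unfolding is_chain_def by (metis last_conv_nth)

lemma is_chain_nth_Suc:
  assumes "Suc x < length xs"
  shows "c < xs ! Suc x" "xs ! Suc x \<le> n" "p (xs ! x) < p (xs ! Suc x)" "p (xs ! Suc x) \<le> t"
    and "\<And>k. c < k \<Longrightarrow> k \<le> n \<Longrightarrow> p (xs ! x) < p k \<Longrightarrow> p k \<le> t \<Longrightarrow> xs ! Suc x \<le> k"
proof -
  let ?Q = "\<lambda>k. c < k \<and> k \<le> n \<and> p (xs ! x) < p k \<and> p k \<le> t"
  have ex: "\<exists>k. ?Q k" and eq: "xs ! Suc x = (LEAST k. ?Q k)"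
    using chain assms unfolding is_chain_def by blast+
  have "?Q (xs ! Suc x)" unfolding eq using ex by (rule LeastI_ex)
  then show "c < xs ! Suc x" "xs ! Suc x \<le> n" "p (xs ! x) < p (xs ! Suc x)" "p (xs ! Suc x) \<le> t"
    by simp_all
  show "xs ! Suc x \<le> k" if "c < k" "k \<le> n" "p (xs ! x) < p k" "p k \<le> t" for k
    unfolding eq using that by (simp add: Least_le)
qed

lemma is_chain_strict_mono:
  assumes "x < y" "y < length xs"
  shows "p (xs ! x) < p (xs ! y)"
  using assms
proof (induction y)
  case (Suc y)
  then show ?case using is_chain_nth_Suc(3)[of y] less_Suc_eq by fastforce
qed simp

lemma is_chain_distinct: "distinct xs"
  unfolding distinct_conv_nth
  using is_chain_strict_mono by (metis less_irrefl linorder_neqE_nat)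

lemma is_chain_set_cases:
  assumes "k \<in> set xs"
  obtains "k = i0" | x where "Suc x < length xs" "xs ! Suc x = k"
  using assms is_chain_hd by (metis in_set_conv_nth not0_implies_Suc)

lemma is_chain_set_subset:
  assumes "1 \<le> i0" "i0 \<le> n"
  shows "set xs \<subseteq> {1..n}"
proof
  fix k assume "k \<in> set xs"
  then show "k \<in> {1..n}"
    by (cases rule: is_chain_set_cases) (use assms is_chain_nth_Suc(1,2) in force)+
qed

lemma chain_update_hd: "chain_update p xs i0 = t"
  using is_chain_nonempty is_chain_hd is_chain_last
  by (simp add: chain_update_def hd_conv_nth last_conv_nth)

lemma chain_update_nth_Suc:
  assumes "Suc x < length xs"
  shows "chain_update p xs (xs ! Suc x) = p (xs ! x)"
proof -
  have "xs ! Suc x \<noteq> hd xs"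
    using assms is_chain_nonempty nth_eq_iff_index_eq[OF is_chain_distinct, of "Suc x" 0]
    by (simp add: hd_conv_nth[OF is_chain_nonempty])
  moreover have "map_of (zip (tl xs) (map p (butlast xs))) (tl xs ! x) = Some (map p (butlast xs) ! x)"
    by (rule map_of_zip_nth) (use is_chain_distinct assms in \<open>auto simp: distinct_tl\<close>)
  ultimately show ?thesis
    using assms by (simp add: chain_update_def nth_tl nth_butlast)
qed

lemma chain_update_le:
  assumes "k \<noteq> i0"
  shows "chain_update p xs k \<le> p k"
proof (cases "k \<in> set xs")
  case True
  then show ?thesis
    by (cases rule: is_chain_set_cases)
       (use assms chain_update_nth_Suc is_chain_nth_Suc(3) in \<open>auto intro: less_imp_le\<close>)
next
  case False
  then show ?thesis using chain_update_notin is_chain_nonempty by simp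
qed

lemma chain_update_image:
  assumes "set xs \<subseteq> A"
  shows "chain_update p xs ` A = p ` A"
proof -
  have "chain_update p xs ` set xs = p ` set xs"
  proof (intro equalityI subsetI)
    fix v assume "v \<in> chain_update p xs ` set xs"
    then obtain k where k: "k \<in> set xs" "v = chain_update p xs k" by blast
    from k(1) show "v \<in> p ` set xs"
    proof (cases rule: is_chain_set_cases)
      case 1
      then show ?thesis using k(2) chain_update_hd is_chain_last is_chain_nonempty
        by (metis diff_less image_eqI length_greater_0_conv nth_mem zero_less_one)
    next
      case (2 x)
      then show ?thesis using k(2) chain_update_nth_Suc by (metis Suc_lessD image_eqI nth_mem)
    qed
  next
    fix v assume "v \<in> p ` set xs"
    then obtain x where x: "x < length xs" "v = p (xs ! x)" by (auto simp: in_set_conv_nth)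
    show "v \<in> chain_update p xs ` set xs"
    proof (cases "Suc x < length xs")
      case True
      then show ?thesis using x chain_update_nth_Suc[OF True] by (metis image_eqI nth_mem)
    next
      case False
      then have "x = length xs - 1" using x by simp
      then show ?thesis using x chain_update_hd is_chain_last is_chain_hd is_chain_nonempty
        by (metis image_eqI length_greater_0_conv nth_mem)
    qed
  qed
  moreover have "chain_update p xs ` (A - set xs) = p ` (A - set xs)"
    using chain_update_notin is_chain_nonempty by simp
  ultimately show ?thesis
    using assms by (metis Diff_partition image_Un)
qed

lemma inj_on_chain_update:
  assumes "finite A" "set xs \<subseteq> A" "inj_on p A"
  shows "inj_on (chain_update p xs) A"
  using assms chain_update_image by (metis card_image eq_card_imp_inj_on)

lemma chain_update_below:
  assumes "i0 \<le> c" "k \<le> c" "k \<noteq> i0"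
  shows "chain_update p xs k = p k"
proof -
  have "k \<notin> set xs"
  proof
    assume "k \<in> set xs"
    then show False
      by (cases rule: is_chain_set_cases) (use assms is_chain_nth_Suc(1) in force)+
  qed
  then show ?thesis using chain_update_notin is_chain_nonempty by simp
qed

lemma chain_update_less:
  assumes "1 \<le> i0" "i0 \<le> c" "inj_on p {1..n}"
    and "c < a" "a < b" "b \<le> n" "p a < p b"
  shows "chain_update p xs a < chain_update p xs b"
proof (cases "b \<in> set xs")
  case False
  then have "chain_update p xs b = p b" using chain_update_notin is_chain_nonempty by simp
  moreover have "chain_update p xs a \<le> p a" using assms by (intro chain_update_le) simp
  ultimately show ?thesis using \<open>p a < p b\<close> by simp
next
  case True
  then obtain y where y: "Suc y < length xs" "xs ! Suc y = b"
    using assms by (cases rule: is_chain_set_cases) auto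
  then have b_upd: "chain_update p xs b = p (xs ! y)" using chain_update_nth_Suc by metis
  show ?thesis
  proof (cases "a \<in> set xs")
    case True
    then obtain x where x: "Suc x < length xs" "xs ! Suc x = a"
      using assms by (cases rule: is_chain_set_cases) auto
    have "x < y"
    proof (rule ccontr)
      assume "\<not> x < y"
      then have "p b \<le> p a"
        using x y is_chain_strict_mono[of "Suc y" "Suc x"] by (cases "x = y") auto
      then show False using \<open>p a < p b\<close> by simp
    qed
    then have "p (xs ! x) < p (xs ! y)" using is_chain_strict_mono y by simp
    then show ?thesis using b_upd x chain_update_nth_Suc by metis
  next
    case False
    \<comment> \<open>otherwise \<open>a\<close> would have been chosen before \<open>b\<close> as successor of \<open>xs ! y\<close>\<close>
    have "\<not> p (xs ! y) < p a"
    proof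
      assume "p (xs ! y) < p a"
      then have "b \<le> a"
        using is_chain_nth_Suc(4,5)[OF y(1)] y(2) assms by fastforce
      then show False using \<open>a < b\<close> by simp
    qed
    moreover have "p a \<noteq> p (xs ! y)"
    proof -
      have "xs ! y \<in> {1..n}"
        using is_chain_set_subset assms y(1) by (meson Suc_lessD nth_mem order.trans subsetD less_imp_le)
      moreover have "xs ! y \<noteq> a" using False y(1) by (meson Suc_lessD nth_mem)
      ultimately show ?thesis using assms by (auto dest: inj_onD)
    qed
    ultimately show ?thesis using b_upd False chain_update_notin is_chain_nonempty by simp
  qed
qed

lemma strict_mono_on_chain_update:
  assumes "1 \<le> i0" "i0 \<le> c" "c \<le> L" "H \<le> n" "inj_on p {1..n}" "strict_mono_on {L<..H} p"
  shows "strict_mono_on {L<..H} (chain_update p xs)"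
proof (rule strict_mono_onI)
  fix a b assume ab: "a \<in> {L<..H}" "b \<in> {L<..H}" "a < b"
  then have "p a < p b" using assms(6) by (simp add: strict_mono_onD)
  then show "chain_update p xs a < chain_update p xs b"
    using ab assms by (intro chain_update_less) auto
qed

end

lemma col_len_antimono: "j \<le> j' \<Longrightarrow> col_len n lam j' \<le> col_len n lam j"
  unfolding col_len_def by (rule card_mono) auto

lemma col_len_le: "col_len n lam j \<le> n"
proof -
  have "col_len n lam j \<le> card {1..n}" unfolding col_len_def by (rule card_mono) auto
  then show ?thesis by simp
qed

lemma is_partition_le_first:
  assumes "is_partition n lam" "1 \<le> i" "i \<le> n"
  shows "lam i \<le> lam 1"
  using assms(2,3)
proof (induction i rule: dec_induct)
  case (step i)
  then have "lam (Suc i) \<le> lam i" using assms(1) unfolding is_partition_def by simp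
  then show ?case using step by simp
qed simp

lemma ncols_pos:
  assumes "is_partition n lam"
  shows "1 \<le> ncols lam"
proof -
  obtain i where "i \<in> {1..n}" "lam i \<noteq> 0" using assms unfolding is_partition_def by blast
  then show ?thesis using is_partition_le_first[OF assms] unfolding ncols_def by fastforce
qed

lemma ssyt_column_strict_mono:
  assumes "ssyt n lam T" "1 \<le> j" "j \<le> ncols lam"
  shows "strict_mono_on {1..col_len n lam j} (T j)"
proof (rule strict_mono_onI)
  fix a b assume a: "a \<in> {1..col_len n lam j}" and "b \<in> {1..col_len n lam j}" "a < b"
  then show "T j a < T j b"
  proof (induction b)
    case (Suc b)
    then have "T j b < T j (Suc b)" using assms a unfolding ssyt_def by simp
    then show ?case using Suc by (cases "a = b") auto
  qed simp
qed

lemma sorted_le_nth_last: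
  assumes "sorted xs" "v \<in> set xs"
  shows "v \<le> xs ! (length xs - 1)"
proof -
  obtain m where "m < length xs" "xs ! m = v" using assms(2) by (auto simp: in_set_conv_nth)
  then show ?thesis using sorted_nth_mono[OF assms(1), of m "length xs - 1"] by simp
qed

lemma sorted_less_nth_imp_le_pred:
  assumes "sorted xs" "v \<in> set xs" "k < length xs" "v < xs ! k"
  shows "0 < k" "v \<le> xs ! (k - 1)"
proof -
  obtain m where m: "m < length xs" "xs ! m = v" using assms(2) by (auto simp: in_set_conv_nth)
  have "m < k"
  proof (rule ccontr)
    assume "\<not> m < k"
    then have "xs ! k \<le> v" using sorted_nth_mono[OF assms(1), of k m] m by simp
    then show False using assms(4) by simp
  qed
  then show "0 < k" "v \<le> xs ! (k - 1)"
    using sorted_nth_mono[OF assms(1), of m "k - 1"] m assms(3) by auto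
qed

lemma zeta_eq_nth:
  "1 \<le> h \<Longrightarrow> h \<le> ndist n lam \<Longrightarrow> zeta n lam h = sorted_list_of_set (col_lens n lam) ! (h - 1)"
  unfolding zeta_def by simp

lemma length_sorted_col_lens: "length (sorted_list_of_set (col_lens n lam)) = ndist n lam"
  unfolding ndist_def col_lens_def by simp

lemma beta_column:
  assumes "1 \<le> h" "h \<le> ndist n lam"
  shows "1 \<le> beta n lam h" "beta n lam h \<le> ncols lam"
    "col_len n lam (beta n lam h) = zeta n lam h"
    "\<And>j. beta n lam h < j \<Longrightarrow> j \<le> ncols lam \<Longrightarrow> col_len n lam j \<le> zeta n lam (h - 1)"
proof -
  define xs where "xs = sorted_list_of_set (col_lens n lam)"
  have sorted: "sorted xs" and set_xs: "set xs = col_lens n lam"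
    unfolding xs_def col_lens_def by simp_all
  have len: "h - 1 < length xs" using assms length_sorted_col_lens unfolding xs_def by simp
  define J where "J = {j \<in> {1..ncols lam}. col_len n lam j = zeta n lam h}"
  have "zeta n lam h \<in> col_lens n lam"
    using zeta_eq_nth[OF assms] len set_xs nth_mem unfolding xs_def by metis
  then have "J \<noteq> {}" unfolding J_def col_lens_def by auto
  moreover have fin: "finite J" unfolding J_def by simp
  ultimately have "Max J \<in> J" by (rule Max_in[rotated])
  moreover have beta: "beta n lam h = Max J" unfolding beta_def J_def using assms by simp
  ultimately show "1 \<le> beta n lam h" "beta n lam h \<le> ncols lam"
    and col: "col_len n lam (beta n lam h) = zeta n lam h"
    unfolding J_def by auto
  fix j assume j: "beta n lam h < j" "j \<le> ncols lam"
  then have "j \<notin> J" using beta Max_ge[OF fin, of j] by auto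
  moreover have "col_len n lam j \<le> col_len n lam (beta n lam h)" using j by (simp add: col_len_antimono)
  ultimately have "col_len n lam j < xs ! (h - 1)"
    using j col zeta_eq_nth[OF assms] unfolding J_def xs_def by fastforce
  moreover have "col_len n lam j \<in> set xs"
    using j \<open>1 \<le> beta n lam h\<close> set_xs unfolding col_lens_def by simp
  ultimately have "0 < h - 1" "col_len n lam j \<le> xs ! (h - 1 - 1)"
    using sorted_less_nth_imp_le_pred[OF sorted _ len] by auto
  then show "col_len n lam j \<le> zeta n lam (h - 1)"
    using zeta_eq_nth[of "h - 1"] assms unfolding xs_def by simp
qed

lemma first_column_le_zeta_ndist:
  assumes "is_partition n lam"
  shows "col_len n lam 1 \<le> zeta n lam (ndist n lam)"
proof -
  have "col_len n lam 1 \<in> set (sorted_list_of_set (col_lens n lam))"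
    using ncols_pos[OF assms] unfolding col_lens_def by simp
  moreover from this have "1 \<le> ndist n lam"
    using length_sorted_col_lens by (metis One_nat_def Suc_leI length_pos_if_in_set)
  ultimately show ?thesis
    using sorted_le_nth_last[of "sorted_list_of_set (col_lens n lam)"] zeta_eq_nth[of "ndist n lam"]
      length_sorted_col_lens by simp
qed

lemma zeta_le: "zeta n lam h \<le> n"
proof (cases "1 \<le> h \<and> h \<le> ndist n lam")
  case True
  then have "h - 1 < length (sorted_list_of_set (col_lens n lam))"
    using length_sorted_col_lens by auto
  then have "zeta n lam h \<in> set (sorted_list_of_set (col_lens n lam))"
    using zeta_eq_nth True by (metis nth_mem)
  then show ?thesis unfolding col_lens_def using col_len_le by auto
qed (auto simp: zeta_def)

lemma one_le_beta: "1 \<le> beta n lam h"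
  using beta_column(1)[of h n lam] by (auto simp: beta_def)

lemma col_len_after_beta:
  assumes "is_partition n lam" "1 \<le> h" "h \<le> ndist n lam + 1" "beta n lam h < j" "j \<le> ncols lam"
  shows "col_len n lam j \<le> zeta n lam (h - 1)"
proof (cases "h \<le> ndist n lam")
  case True
  then show ?thesis using beta_column(4) assms(2,4,5) by blast
next
  case False
  then have "h = ndist n lam + 1" using assms(3) by simp
  then show ?thesis
    using order_trans[OF col_len_antimono first_column_le_zeta_ndist[OF assms(1)]] assms(4)
    by (simp add: beta_def)
qed

context
  fixes n :: nat and lam :: "nat \<Rightarrow> nat" and T :: "nat \<Rightarrow> nat \<Rightarrow> nat"
  assumes partition: "is_partition n lam" and tableau: "ssyt n lam T"
begin

lemma first_column_image:
  shows "T 1 ` {1..col_len n lam 1} \<subseteq> {1..n}"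
    and "card (T 1 ` {1..col_len n lam 1}) = col_len n lam 1"
proof -
  have col1: "1 \<le> ncols lam" using ncols_pos[OF partition] .
  then show "T 1 ` {1..col_len n lam 1} \<subseteq> {1..n}" using tableau unfolding ssyt_def by auto
  have "inj_on (T 1) {1..col_len n lam 1}"
    using ssyt_column_strict_mono[OF tableau _ col1] by (simp add: strict_mono_on_imp_inj_on)
  then show "card (T 1 ` {1..col_len n lam 1}) = col_len n lam 1" by (simp add: card_image)
qed

lemma pi0_beyond_first_column:
  defines "rest \<equiv> sorted_list_of_set ({1..n} - T 1 ` {1..col_len n lam 1})"
  shows "length rest = n - col_len n lam 1" "sorted_wrt (<) rest"
    "set rest = {1..n} - T 1 ` {1..col_len n lam 1}"
    "\<And>k. col_len n lam 1 < k \<Longrightarrow> k \<le> n \<Longrightarrow> pi0 n lam T k = rest ! (k - col_len n lam 1 - 1)"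
  using first_column_image
  by (auto simp: rest_def pi0_def Let_def card_Diff_subset finite_subset)

lemma strict_mono_on_pi0: "strict_mono_on {col_len n lam 1<..n} (pi0 n lam T)"
proof (rule strict_mono_onI)
  fix a b assume "a \<in> {col_len n lam 1<..n}" "b \<in> {col_len n lam 1<..n}" "a < b"
  then show "pi0 n lam T a < pi0 n lam T b"
    using sorted_wrt_nth_less[OF pi0_beyond_first_column(2)] pi0_beyond_first_column(1,4)
    by simp
qed

lemma pi0_image: "pi0 n lam T ` {1..n} = {1..n}"
proof (intro equalityI subsetI)
  fix v assume "v \<in> pi0 n lam T ` {1..n}"
  then obtain k where k: "k \<in> {1..n}" "v = pi0 n lam T k" by blast
  show "v \<in> {1..n}"
  proof (cases "k \<le> col_len n lam 1")
    case True
    then have "v \<in> T 1 ` {1..col_len n lam 1}" using k by (simp add: pi0_def)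
    then show ?thesis using first_column_image(1) by blast
  next
    case False
    let ?rest = "sorted_list_of_set ({1..n} - T 1 ` {1..col_len n lam 1})"
    have "k - col_len n lam 1 - 1 < length ?rest"
      using False k pi0_beyond_first_column(1) by simp
    then have "?rest ! (k - col_len n lam 1 - 1) \<in> {1..n}"
      using pi0_beyond_first_column(3) by (metis DiffD1 nth_mem)
    then show ?thesis using False k pi0_beyond_first_column(4) by simp
  qed
next
  fix v assume v: "v \<in> {1..n}"
  show "v \<in> pi0 n lam T ` {1..n}"
  proof (cases "v \<in> T 1 ` {1..col_len n lam 1}")
    case True
    then obtain k where "k \<in> {1..col_len n lam 1}" "v = T 1 k" by blast
    then show ?thesis using col_len_le[of n lam 1] by (force simp: pi0_def)
  next
    case False
    then obtain m where m: "m < n - col_len n lam 1" "v = sorted_list_of_set ({1..n} - T 1 ` {1..col_len n lam 1}) ! m"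
      using v pi0_beyond_first_column(1,3) by (metis DiffI in_set_conv_nth)
    then have "v = pi0 n lam T (m + col_len n lam 1 + 1)"
      using pi0_beyond_first_column(4)[of "m + col_len n lam 1 + 1"] by simp
    moreover have "m + col_len n lam 1 + 1 \<in> {1..n}" using m by simp
    ultimately show ?thesis by blast
  qed
qed

lemma inj_on_pi0: "inj_on (pi0 n lam T) {1..n}"
  by (metis eq_card_imp_inj_on finite_atLeastAtMost pi0_image)

end

lemma greedy_stepE:
  assumes "greedy_step n lam T j i p p'"
  obtains "T (j - 1) i = T j i" "p' = p"
    | xs where "T (j - 1) i \<noteq> T j i" "is_chain n (col_len n lam j) (T j i) p i xs"
      "p' = chain_update p xs"
  using assms unfolding greedy_step_def by (metis (full_types))

lemma greedy_step_inj_on: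
  assumes "greedy_step n lam T j i p p'" "1 \<le> i" "i \<le> col_len n lam j" "inj_on p {1..n}"
  shows "inj_on p' {1..n}"
  using assms(1)
proof (cases rule: greedy_stepE)
  case (2 xs)
  have "set xs \<subseteq> {1..n}"
    using is_chain_set_subset[OF 2(2)] assms(2,3) col_len_le order_trans by blast
  then show ?thesis using inj_on_chain_update[OF 2(2)] assms(4) 2(3) by simp
qed (use assms in simp)

lemma greedy_step_entries:
  assumes "greedy_step n lam T j i p p'" "i \<le> col_len n lam j" "p i = T (j - 1) i"
  shows "p' i = T j i" "\<And>k. k \<le> col_len n lam j \<Longrightarrow> k \<noteq> i \<Longrightarrow> p' k = p k"
proof -
  from assms(1) have "p' i = T j i \<and> (\<forall>k. k \<le> col_len n lam j \<longrightarrow> k \<noteq> i \<longrightarrow> p' k = p k)"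
  proof (cases rule: greedy_stepE)
    case (2 xs)
    then show ?thesis using chain_update_hd[OF 2(2)] chain_update_below[OF 2(2) assms(2)] by simp
  qed (use assms(3) in simp)
  then show "p' i = T j i" "\<And>k. k \<le> col_len n lam j \<Longrightarrow> k \<noteq> i \<Longrightarrow> p' k = p k" by auto
qed

lemma greedy_step_strict_mono_on:
  assumes "greedy_step n lam T j i p p'" "1 \<le> i" "i \<le> col_len n lam j"
    and "col_len n lam j \<le> L" "H \<le> n" "inj_on p {1..n}" "strict_mono_on {L<..H} p"
  shows "strict_mono_on {L<..H} p'"
  using assms(1)
  by (cases rule: greedy_stepE) (use assms strict_mono_on_chain_update in auto)

lemma greedy_invariant:
  assumes "is_partition n lam" "ssyt n lam T" "greedy n lam T (j, i) p"
  shows "inj_on p {1..n} \<and> (\<forall>k. i \<le> k \<and> k \<le> col_len n lam j \<longrightarrow> p k = T j k)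
    \<and> (\<forall>k. 1 \<le> k \<and> k < i \<longrightarrow> p k = T (j - 1) k)"
  using assms(3)
proof (induction "(j, i)" p arbitrary: j i rule: greedy.induct)
  case start
  then show ?case using inj_on_pi0[OF assms(1,2)] by (simp add: pi0_def)
next
  case (step j i p p')
  have p: "inj_on p {1..n} \<and> p i = T (j - 1) i \<and> (\<forall>k. 1 \<le> k \<and> k < i \<longrightarrow> p k = T (j - 1) k)
      \<and> (\<forall>k. i < k \<and> k \<le> col_len n lam j \<longrightarrow> p k = T j k)"
  proof (cases "i = col_len n lam j")
    case True
    have "col_len n lam j \<le> col_len n lam (j - 1)" by (rule col_len_antimono) simp
    then show ?thesis using True step(3) step(6)[of "j - 1" 1] by auto
  next
    case False
    then show ?thesis using step(3,4) step(6)[of j "i + 1"] by auto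
  qed
  have p'_i: "p' i = T j i" and p'_k: "\<And>k. k \<le> col_len n lam j \<Longrightarrow> k \<noteq> i \<Longrightarrow> p' k = p k"
    using greedy_step_entries[OF step(7,4)] p by auto
  show ?case
  proof (intro conjI allI impI)
    show "inj_on p' {1..n}" using greedy_step_inj_on[OF step(7,3,4)] p by simp
    fix k
    assume "i \<le> k \<and> k \<le> col_len n lam j"
    then show "p' k = T j k" using p p'_i p'_k by (cases "k = i") auto
  next
    fix k
    assume "1 \<le> k \<and> k < i"
    then show "p' k = T (j - 1) k" using p p'_k step(4) by auto
  qed
qed

lemma greedy_inj_on:
  assumes "is_partition n lam" "ssyt n lam T" "greedy n lam T q p"
  shows "inj_on p {1..n}"
  using greedy_invariant[OF assms(1,2)] assms(3) by (cases q) blast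

lemma greedy_at_column_top:
  assumes "is_partition n lam" "ssyt n lam T" "greedy n lam T (j, 1) p" "k \<in> {1..col_len n lam j}"
  shows "p k = T j k"
  using greedy_invariant[OF assms(1-3)] assms(4) by simp

lemma greedy_at_start: "greedy n lam T (1, 1) p \<Longrightarrow> p = pi0 n lam T"
  by (cases rule: greedy.cases) auto

lemma greedy_strict_mono_on_after:
  assumes "is_partition n lam" "ssyt n lam T" "1 \<le> j0"
    and short: "\<And>j. j0 < j \<Longrightarrow> j \<le> ncols lam \<Longrightarrow> col_len n lam j \<le> L" and "H \<le> n"
    and base: "\<And>q. greedy n lam T (j0, 1) q \<Longrightarrow> strict_mono_on {L<..H} q"
  shows "greedy n lam T (j, i) p \<Longrightarrow> reading_le (j0, 1) (j, i) \<Longrightarrow> strict_mono_on {L<..H} p"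
proof (induction "(j, i)" p arbitrary: j i rule: greedy.induct)
  case start
  then show ?case using \<open>1 \<le> j0\<close> base greedy.start by (simp add: reading_le_def)
next
  case (step j i p p')
  show ?case
  proof (cases "j = j0 \<and> i = 1")
    case True
    then show ?thesis using base greedy.step[OF step(1-5,7)] by simp
  next
    case False
    then have "j0 < j" using step(3,8) by (auto simp: reading_le_def)
    have "strict_mono_on {L<..H} p"
    proof (cases "i = col_len n lam j")
      case True
      moreover have "j0 < j - 1 \<or> j0 = j - 1" using \<open>j0 < j\<close> by arith
      ultimately show ?thesis using step(6)[of "j - 1" 1] by (simp add: reading_le_def)
    next
      case False
      then show ?thesis using \<open>j0 < j\<close> step(6)[of j "i + 1"] by (simp add: reading_le_def)
    qed
    moreover have "inj_on p {1..n}" using greedy_inj_on[OF assms(1,2) step(5)] .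
    ultimately show ?thesis
      using greedy_step_strict_mono_on[OF step(7,3,4) short] \<open>j0 < j\<close> step(2) \<open>H \<le> n\<close> by simp
  qed
qed

lemma greedy_at_beta_strict_mono_on:
  assumes "is_partition n lam" "ssyt n lam T" "1 \<le> h" "h \<le> ndist n lam + 1"
    and "greedy n lam T (beta n lam h, 1) q"
  shows "strict_mono_on {zeta n lam (h - 1)<..zeta n lam h} q"
proof (cases "h \<le> ndist n lam")
  case True
  note beta = beta_column[OF assms(3) True]
  show ?thesis
  proof (rule strict_mono_onI)
    fix a b
    assume "a \<in> {zeta n lam (h - 1)<..zeta n lam h}" "b \<in> {zeta n lam (h - 1)<..zeta n lam h}"
      and "a < b"
    then have "a \<in> {1..col_len n lam (beta n lam h)}" "b \<in> {1..col_len n lam (beta n lam h)}"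
      using beta(3) by auto
    then show "q a < q b"
      using ssyt_column_strict_mono[OF assms(2) beta(1,2)] greedy_at_column_top[OF assms(1,2,5)] \<open>a < b\<close>
      by (metis strict_mono_onD)
  qed
next
  case False
  then have h: "h = ndist n lam + 1" using assms(4) by simp
  then have "q = pi0 n lam T" using assms(5) greedy_at_start by (simp add: beta_def)
  moreover have "{zeta n lam (h - 1)<..zeta n lam h} \<subseteq> {col_len n lam 1<..n}"
    using first_column_le_zeta_ndist[OF assms(1)] zeta_le[of n lam h] h by auto
  ultimately show ?thesis by (metis monotone_on_subset strict_mono_on_pi0[OF assms(1,2)])
qed

theorem lemma4p1:
  fixes n :: nat and lam :: "nat \<Rightarrow> nat" and T :: "nat \<Rightarrow> nat \<Rightarrow> nat" and h :: nat
  assumes "0 < n"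
    and "is_partition n lam"
    and "ssyt n lam T"
    and "1 \<le> h" and "h \<le> ndist n lam + 1"
  shows "\<forall>j i p. greedy n lam T (j,i) p \<and> reading_le (beta n lam h, 1) (j,i) \<longrightarrow>
           (\<forall>a b. zeta n lam (h-1) + 1 \<le> a \<longrightarrow> a < b \<longrightarrow> b \<le> zeta n lam h \<longrightarrow> p a < p b)"
proof (intro allI impI)
  fix j i p a b
  assume "greedy n lam T (j,i) p \<and> reading_le (beta n lam h, 1) (j,i)"
    and ab: "zeta n lam (h-1) + 1 \<le> a" "a < b" "b \<le> zeta n lam h"
  then have "strict_mono_on {zeta n lam (h - 1)<..zeta n lam h} p"
    using greedy_strict_mono_on_after[OF assms(2,3) one_le_beta col_len_after_beta[OF assms(2,4,5)]
        zeta_le greedy_at_beta_strict_mono_on[OF assms(2-5)]]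
    by blast
  then show "p a < p b" using ab by (simp add: strict_mono_onD)
qed

end
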